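(* Let $\underline x<\overline x$ and $g\in C^2([\underline x,\overline x])$ satisfy conditions (G1)–(G5) below. 1. The minimizer $(\hat m(x),\hat s_1(x),\hat s_2(x))$ of the infimum in (G2) is well defined for every $x\in[\underline x,\overline x]$. 2. Let $\hat\alpha(x)=\alpha(\hat m(x),\hat s_1(x),\hat s_2(x))$, and define $\hat\beta,\hat\gamma,\hat\theta_1,\hat\theta_2$ analogously. Then the functions $\hat\alpha$, $\hat\beta$, $\hat\gamma$, $\hat\theta_1$, $\hat\theta_2$, $\frac{\hat s_1(x)}{g'(x)}$, $\frac{\hat s_2(x)}{g'(x)}$ and $\frac{\hat\beta(x)}{g'(x)}$ are Lipschitz on $[\underline x,\overline x]$. 3. For $x\in[\underline x,\overline x]$, $$-\hat\alpha(x)g'(x)-\big(\hat m(x)+\hat\beta(x)\big)+\hat\gamma(x)\Big(\frac{x}{g'(x)}\Big)'=0.$$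
   Context: Parameters. - $\rho\in(-1,1)$. - $\mu_1,\mu_2,\sigma_1,\sigma_2>0$. - $\overline\lambda>0$ and $\underline\lambda\in(0,1)$. - $p\in(-\infty,1)\setminus\{0\}$, with $q=p/(1-p)$ and $\operatorname{sgn}(p)$ the sign of $p$. - $\delta>0$. Standing assumption: $$\delta>\frac{q}{2(1-\rho^2)}\Big(\big(\tfrac{\mu_1}{\sigma_1}\big)^2+\big(\tfrac{\mu_2}{\sigma_2}\big)^2-2\rho\tfrac{\mu_1\mu_2}{\sigma_1\sigma_2}\Big),\qquad \mu_1\ne\tfrac{\rho\mu_2\sigma_1}{\sigma_2},\qquad \mu_2\ne\tfrac{\rho\sigma_1\sigma_2}{1+q}.$$ Functions. For $m,s_1,s_2\in\mathbb R$ with $s_1\ne-\sigma_1$, define $$\theta_1(m,s_1,s_2)=\tfrac{\rho(\sigma_2s_2-\mu_2)}{(1-\rho^2)\sigma_2}-\tfrac{\mu_2s_2-(m+\mu_1+s_1\sigma_1+\frac12(s_1^2+s_2^2))\sigma_2}{(1-\rho^2)\sigma_2(s_1+\sigma_1)},\qquad \theta_2=\tfrac{\mu_2}{\sigma_2}-\rho\theta_1,$$ $$\alpha=(1+q)\delta-\tfrac{q(1+q)}2(\theta_1^2+\theta_2^2+2\rho\theta_1\theta_2),\qquad \beta=q\big((s_1+\rho s_2)\theta_1+(\rho s_1+s_2)\theta_2\big),\qquad \gamma=\tfrac12(s_1^2+s_2^2+2\rho s_1s_2).$$ Conditions (G1)–(G5) on $\underline x<\overline x$ and $g\in C^2([\underline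 x,\overline x])$: - (G1) if $\mu_1>\rho\mu_2\sigma_1/\sigma_2$ then $0<\underline x<\overline x$; if $\mu_1<\rho\mu_2\sigma_1/\sigma_2$ then $\underline x<\overline x<0$. - (G2) for $x\in[\underline x,\overline x]$, $$\inf_{m,s_1,s_2}\{-\alpha g(x)-(m+\beta)x+\gamma\tfrac{x}{g'(x)}+\operatorname{sgn}(p)\}=0.$$ - (G3) $g'(\underline x)=g'(\overline x)=0$ and $\int_{\underline x}^{\overline x}\frac{g'(x)}x\,dx=\log\frac{1+\overline\lambda}{1-\underline\lambda}$. - (G4) $q\,g(x)$, $q\,g(x)(g'(x)+1)-(1+q)xg'(x)$, $q(g(x)-xg'(x))$ and $g'(x)+1$ are strictly positive on $[\underline x,\overline x]$. - (G5) $g'(x)/x>0$ on $(\underline x,\overline x)$. *)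

theory Defs
  imports "HOL-Analysis.Analysis"
begin

definition qq :: "real \<Rightarrow> real" where
  "qq p = p / (1 - p)"

definition theta1 :: "real \<Rightarrow> real \<Rightarrow> real \<Rightarrow> real \<Rightarrow> real \<Rightarrow> real \<Rightarrow> real \<Rightarrow> real \<Rightarrow> real" where
  "theta1 \<rho> \<mu>1 \<mu>2 \<sigma>1 \<sigma>2 m s1 s2 =
     \<rho> * (\<sigma>2 * s2 - \<mu>2) / ((1 - \<rho>^2) * \<sigma>2)
     - (\<mu>2 * s2 - (m + \<mu>1 + s1 * \<sigma>1 + (s1^2 + s2^2) / 2) * \<sigma>2)
       / ((1 - \<rho>^2) * \<sigma>2 * (s1 + \<sigma>1))"

definition theta2 :: "real \<Rightarrow> real \<Rightarrow> real \<Rightarrow> real \<Rightarrow> real \<Rightarrow> real \<Rightarrow> real \<Rightarrow> real \<Rightarrow> real" where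
  "theta2 \<rho> \<mu>1 \<mu>2 \<sigma>1 \<sigma>2 m s1 s2 = \<mu>2 / \<sigma>2 - \<rho> * theta1 \<rho> \<mu>1 \<mu>2 \<sigma>1 \<sigma>2 m s1 s2"

definition alpha :: "real \<Rightarrow> real \<Rightarrow> real \<Rightarrow> real \<Rightarrow> real \<Rightarrow> real \<Rightarrow> real \<Rightarrow> real \<Rightarrow> real \<Rightarrow> real \<Rightarrow> real" where
  "alpha \<rho> \<mu>1 \<mu>2 \<sigma>1 \<sigma>2 q \<delta> m s1 s2 =
     (let t1 = theta1 \<rho> \<mu>1 \<mu>2 \<sigma>1 \<sigma>2 m s1 s2; t2 = theta2 \<rho> \<mu>1 \<mu>2 \<sigma>1 \<sigma>2 m s1 s2
      in (1 + q) * \<delta> - q * (1 + q) / 2 * (t1^2 + t2^2 + 2 * \<rho> * t1 * t2))"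

definition beta :: "real \<Rightarrow> real \<Rightarrow> real \<Rightarrow> real \<Rightarrow> real \<Rightarrow> real \<Rightarrow> real \<Rightarrow> real \<Rightarrow> real \<Rightarrow> real" where
  "beta \<rho> \<mu>1 \<mu>2 \<sigma>1 \<sigma>2 q m s1 s2 =
     q * ((s1 + \<rho> * s2) * theta1 \<rho> \<mu>1 \<mu>2 \<sigma>1 \<sigma>2 m s1 s2
          + (\<rho> * s1 + s2) * theta2 \<rho> \<mu>1 \<mu>2 \<sigma>1 \<sigma>2 m s1 s2)"

definition gamma :: "real \<Rightarrow> real \<Rightarrow> real \<Rightarrow> real" where
  "gamma \<rho> s1 s2 = (s1^2 + s2^2 + 2 * \<rho> * s1 * s2) / 2"

text \<open>The objective in (G2), evaluated at a point x with g(x) = gx and g'(x) = dgx.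
  It is extended-real valued: where g'(x) = 0 (only at the endpoints, by (G5)), the
  quotient x/g'(x) is read as +infinity (its limit from the interior by (G5)), with the
  convention 0 * infinity = 0.\<close>
definition G2obj :: "real \<Rightarrow> real \<Rightarrow> real \<Rightarrow> real \<Rightarrow> real \<Rightarrow> real \<Rightarrow> real \<Rightarrow> real \<Rightarrow> real \<Rightarrow> real
                     \<Rightarrow> real \<Rightarrow> real \<Rightarrow> real \<Rightarrow> ereal" where
  "G2obj \<rho> \<mu>1 \<mu>2 \<sigma>1 \<sigma>2 p \<delta> gx dgx x m s1 s2 =
     (let a = alpha \<rho> \<mu>1 \<mu>2 \<sigma>1 \<sigma>2 (qq p) \<delta> m s1 s2;
          b = beta \<rho> \<mu>1 \<mu>2 \<sigma>1 \<sigma>2 (qq p) m s1 s2;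
          c = gamma \<rho> s1 s2
      in if dgx = 0 then
           (if c = 0 then ereal (- a * gx - (m + b) * x + sgn p) else PInfty)
         else ereal (- a * gx - (m + b) * x + c * (x / dgx) + sgn p))"

end

theory Submission
  imports Defs
begin

text \<open>For fixed \<open>x\<close>, write the controls as \<open>(\<theta>1, s1, s2 + \<rho> s1)\<close> instead of \<open>(m, s1, s2)\<close>;
  then the objective of (G2) is the sum of a quadratic form in \<open>(\<theta>1, s1)\<close> and one in
  \<open>s2 + \<rho> s1\<close>. Conditions (G4) and (G5) make both positive definite (at the endpoints,
  where \<open>g' = 0\<close>, any nonzero \<open>s\<close> costs \<open>\<infinity>\<close> and only \<open>\<theta>1\<close> is free), so the minimiser is
  unique and a rational function of \<open>x\<close>, \<open>g(x)\<close> and \<open>g'(x)\<close> with denominators bounded away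
  from zero; \<open>s1\<close> and \<open>s2 + \<rho> s1\<close> even carry a factor \<open>g'(x)\<close>, which makes the quotients by
  \<open>g'\<close> Lipschitz as well. Finally, (G2) says that the optimal value vanishes identically, so
  freezing the controls at their optimum for \<open>x\<close> gives a function of \<open>y\<close> that is nonnegative
  and vanishes at \<open>y = x\<close>: its derivative there, which is the left-hand side of the
  equation, is zero.\<close>

section \<open>Lipschitz functions of a real variable\<close>

definition lipschitz :: "real set \<Rightarrow> (real \<Rightarrow> real) \<Rightarrow> bool" where
  "lipschitz S f \<longleftrightarrow> (\<exists>L. L-lipschitz_on S f)"

lemma lipschitz_const: "lipschitz S (\<lambda>x. c)"
  unfolding lipschitz_def using lipschitz_on_constant by blast

lemma lipschitz_ident: "lipschitz S (\<lambda>x. x)"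
  unfolding lipschitz_def using lipschitz_on_id by blast

lemma lipschitz_add: "lipschitz S f \<Longrightarrow> lipschitz S g \<Longrightarrow> lipschitz S (\<lambda>x. f x + g x)"
  unfolding lipschitz_def using lipschitz_on_add by blast

lemma lipschitz_diff: "lipschitz S f \<Longrightarrow> lipschitz S g \<Longrightarrow> lipschitz S (\<lambda>x. f x - g x)"
  unfolding lipschitz_def using lipschitz_on_diff by blast

lemma lipschitz_subset: "lipschitz S f \<Longrightarrow> T \<subseteq> S \<Longrightarrow> lipschitz T f"
  unfolding lipschitz_def using lipschitz_on_subset by blast

lemma lipschitz_transform: "lipschitz S f \<Longrightarrow> (\<And>x. x \<in> S \<Longrightarrow> g x = f x) \<Longrightarrow> lipschitz S g"
  unfolding lipschitz_def using lipschitz_on_transform by blast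

lemma lipschitz_imp_continuous_on: "lipschitz S f \<Longrightarrow> continuous_on S f"
  unfolding lipschitz_def using lipschitz_on_continuous_on by blast

lemma lipschitz_bounded:
  assumes "lipschitz S f" "compact S"
  obtains B where "B \<ge> 0" "\<And>x. x \<in> S \<Longrightarrow> \<bar>f x\<bar> \<le> B"
proof -
  have "bounded (f ` S)"
    using assms compact_continuous_image compact_imp_bounded lipschitz_imp_continuous_on by blast
  then obtain B where "B > 0" "\<And>x. x \<in> S \<Longrightarrow> \<bar>f x\<bar> \<le> B"
    by (force simp: bounded_pos)
  then show ?thesis using that[of B] by simp
qed

lemma lipschitz_mult:
  assumes "lipschitz S f" "lipschitz S g" "compact S"
  shows "lipschitz S (\<lambda>x. f x * g x)"
proof -
  obtain Lf where Lf: "Lf-lipschitz_on S f" using assms unfolding lipschitz_def by blast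
  obtain Lg where Lg: "Lg-lipschitz_on S g" using assms unfolding lipschitz_def by blast
  obtain Bf where Bf: "Bf \<ge> 0" "\<And>x. x \<in> S \<Longrightarrow> \<bar>f x\<bar> \<le> Bf"
    using lipschitz_bounded assms by metis
  obtain Bg where Bg: "Bg \<ge> 0" "\<And>x. x \<in> S \<Longrightarrow> \<bar>g x\<bar> \<le> Bg"
    using lipschitz_bounded assms by metis
  have "Lf \<ge> 0" "Lg \<ge> 0" using Lf Lg lipschitz_on_nonneg by blast+
  have "(Bf * Lg + Bg * Lf)-lipschitz_on S (\<lambda>x. f x * g x)"
  proof (rule lipschitz_onI)
    fix x y assume xy: "x \<in> S" "y \<in> S"
    have "\<bar>f x * g x - f y * g y\<bar> = \<bar>f x * (g x - g y) + g y * (f x - f y)\<bar>"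
      by (simp add: algebra_simps)
    also have "\<dots> \<le> \<bar>f x\<bar> * \<bar>g x - g y\<bar> + \<bar>g y\<bar> * \<bar>f x - f y\<bar>"
      by (metis abs_mult abs_triangle_ineq)
    also have "\<dots> \<le> Bf * (Lg * \<bar>x - y\<bar>) + Bg * (Lf * \<bar>x - y\<bar>)"
      using lipschitz_onD[OF Lf xy] lipschitz_onD[OF Lg xy] Bf Bg xy
      by (intro add_mono mult_mono) (auto simp: dist_real_def)
    finally show "dist (f x * g x) (f y * g y) \<le> (Bf * Lg + Bg * Lf) * dist x y"
      by (simp add: dist_real_def algebra_simps)
  qed (use Bf Bg \<open>Lf \<ge> 0\<close> \<open>Lg \<ge> 0\<close> in auto)
  then show ?thesis unfolding lipschitz_def by blast
qed

lemma lipschitz_inverse: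
  assumes "lipschitz S h" "compact S" "\<And>x. x \<in> S \<Longrightarrow> h x > 0"
  shows "lipschitz S (\<lambda>x. 1 / h x)"
proof (cases "S = {}")
  case True
  then show ?thesis unfolding lipschitz_def by auto
next
  case False
  obtain x0 where x0: "x0 \<in> S" "\<And>y. y \<in> S \<Longrightarrow> h x0 \<le> h y"
    using continuous_attains_inf[OF assms(2) False lipschitz_imp_continuous_on[OF assms(1)]] by blast
  define e where "e = h x0"
  have e: "e > 0" using x0 assms(3) e_def by auto
  obtain L where L: "L-lipschitz_on S h" using assms unfolding lipschitz_def by blast
  have "(L / e^2)-lipschitz_on S (\<lambda>x. 1 / h x)"
  proof (rule lipschitz_onI)
    fix x y assume xy: "x \<in> S" "y \<in> S"
    have hxy: "h x \<ge> e" "h y \<ge> e" using x0 xy e_def by auto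
    have "\<bar>1 / h x - 1 / h y\<bar> = \<bar>h y - h x\<bar> / (h x * h y)"
      using hxy e by (simp add: field_simps abs_div)
    also have "\<dots> \<le> \<bar>h y - h x\<bar> / e^2"
      using hxy e by (auto simp: power2_eq_square intro!: divide_left_mono mult_mono)
    also have "\<dots> \<le> L * \<bar>x - y\<bar> / e^2"
      using lipschitz_onD[OF L xy] e by (auto simp: dist_real_def abs_minus_commute intro: divide_right_mono)
    finally show "dist (1 / h x) (1 / h y) \<le> L / e^2 * dist x y"
      by (simp add: dist_real_def)
  qed (use lipschitz_on_nonneg[OF L] in simp)
  then show ?thesis unfolding lipschitz_def by blast
qed

lemma lipschitz_divide:
  assumes "lipschitz S f" "lipschitz S h" "compact S" "\<And>x. x \<in> S \<Longrightarrow> h x > 0"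
  shows "lipschitz S (\<lambda>x. f x / h x)"
  using lipschitz_mult[OF assms(1) lipschitz_inverse[OF assms(2-4)] assms(3)] by simp

lemma lipschitz_if_continuous_derivative:
  assumes "\<And>x. x \<in> {a..b} \<Longrightarrow> (f has_real_derivative f' x) (at x within {a..b})"
    and "continuous_on {a..b} f'"
  shows "lipschitz {a..b} f"
proof -
  have "bounded (f' ` {a..b})"
    using compact_continuous_image[OF assms(2)] compact_imp_bounded by blast
  then obtain B where "B > 0" and B: "\<And>x. x \<in> {a..b} \<Longrightarrow> \<bar>f' x\<bar> \<le> B"
    by (force simp: bounded_pos)
  have "B-lipschitz_on {a..b} f"
  proof (rule bounded_derivative_imp_lipschitz)
    fix x assume x: "x \<in> {a..b}"
    show "(f has_derivative (*) (f' x)) (at x within {a..b})"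
      using assms(1)[OF x] has_field_derivative_imp_has_derivative by blast
    show "onorm ((*) (f' x)) \<le> B"
      using B[OF x] by (intro onorm_le) (simp add: abs_mult mult_right_mono)
  qed (use \<open>B > 0\<close> in auto)
  then show ?thesis unfolding lipschitz_def by blast
qed

section \<open>The pointwise minimisation problem\<close>

lemma quadratic_min_1d:
  fixes k b u0 u :: real
  assumes "k > 0" and critical: "2 * k * u0 + b = 0"
  shows "k * u0^2 + b * u0 \<le> k * u^2 + b * u"
    and "k * u^2 + b * u \<le> k * u0^2 + b * u0 \<Longrightarrow> u = u0"
proof -
  have "b = - 2 * k * u0" using critical by linarith
  then have diff: "(k * u^2 + b * u) - (k * u0^2 + b * u0) = k * (u - u0)^2"
    by (simp add: algebra_simps power2_eq_square)
  have "k * (u - u0)^2 \<ge> 0" using \<open>k > 0\<close> by simp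
  then show "k * u0^2 + b * u0 \<le> k * u^2 + b * u" using diff by linarith
  assume "k * u^2 + b * u \<le> k * u0^2 + b * u0"
  then have "k * (u - u0)^2 = 0" using diff \<open>k * (u - u0)^2 \<ge> 0\<close> by linarith
  then show "u = u0" using \<open>k > 0\<close> by simp
qed

lemma quadratic_min_2d:
  fixes P R k a b t0 s0 t s :: real
  assumes "P > 0" and definite: "R^2 < 4 * P * k"
    and critical: "2 * P * t0 - R * s0 + a = 0" "2 * k * s0 - R * t0 + b = 0"
  shows "P * t0^2 - R * t0 * s0 + k * s0^2 + a * t0 + b * s0 \<le> P * t^2 - R * t * s + k * s^2 + a * t + b * s"
    and "P * t^2 - R * t * s + k * s^2 + a * t + b * s \<le> P * t0^2 - R * t0 * s0 + k * s0^2 + a * t0 + b * s0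
           \<Longrightarrow> t = t0 \<and> s = s0"
proof -
  define dt ds where "dt = t - t0" and "ds = s - s0"
  have a: "a = R * s0 - 2 * P * t0" and b: "b = R * t0 - 2 * k * s0" using critical by linarith+
  have diff: "(P * t^2 - R * t * s + k * s^2 + a * t + b * s) - (P * t0^2 - R * t0 * s0 + k * s0^2 + a * t0 + b * s0)
     = P * dt^2 - R * dt * ds + k * ds^2"
    unfolding a b dt_def ds_def by (simp add: algebra_simps power2_eq_square)
  have square: "4 * P * (P * dt^2 - R * dt * ds + k * ds^2) = (2 * P * dt - R * ds)^2 + (4 * P * k - R^2) * ds^2"
    by (simp add: algebra_simps power2_eq_square)
  have "4 * P * (P * dt^2 - R * dt * ds + k * ds^2) \<ge> 0" unfolding square using definite by simp
  then have nonneg: "P * dt^2 - R * dt * ds + k * ds^2 \<ge> 0"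
    using \<open>P > 0\<close> by (simp add: zero_le_mult_iff)
  then show "P * t0^2 - R * t0 * s0 + k * s0^2 + a * t0 + b * s0 \<le> P * t^2 - R * t * s + k * s^2 + a * t + b * s"
    using diff by linarith
  assume "P * t^2 - R * t * s + k * s^2 + a * t + b * s \<le> P * t0^2 - R * t0 * s0 + k * s0^2 + a * t0 + b * s0"
  then have "P * dt^2 - R * dt * ds + k * ds^2 = 0" using diff nonneg by linarith
  then have "(2 * P * dt - R * ds)^2 + (4 * P * k - R^2) * ds^2 = 0" using square by simp
  moreover have "(4 * P * k - R^2) * ds^2 \<ge> 0" using definite by simp
  ultimately have "(2 * P * dt - R * ds)^2 = 0" "(4 * P * k - R^2) * ds^2 = 0"
    by (smt (verit) zero_le_power2)+
  then have "ds = 0" "dt = 0" using definite \<open>P > 0\<close> by auto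
  then show "t = t0 \<and> s = s0" unfolding dt_def ds_def by simp
qed

locale G2_coefficients =
  fixes \<rho> \<mu>1 \<mu>2 \<sigma>1 \<sigma>2 p \<delta> :: real
begin

abbreviation "q \<equiv> qq p"
abbreviation "\<theta>1 \<equiv> theta1 \<rho> \<mu>1 \<mu>2 \<sigma>1 \<sigma>2"
abbreviation "\<theta>2 \<equiv> theta2 \<rho> \<mu>1 \<mu>2 \<sigma>1 \<sigma>2"
abbreviation "\<alpha> \<equiv> alpha \<rho> \<mu>1 \<mu>2 \<sigma>1 \<sigma>2 q \<delta>"
abbreviation "\<beta> \<equiv> beta \<rho> \<mu>1 \<mu>2 \<sigma>1 \<sigma>2 q"
abbreviation "\<gamma> \<equiv> gamma \<rho>"
abbreviation "obj \<equiv> G2obj \<rho> \<mu>1 \<mu>2 \<sigma>1 \<sigma>2 p \<delta>"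

text \<open>The objective of (G2) at a point \<open>x\<close> with \<open>g(x) = G\<close> and \<open>x / g'(x) = c\<close>.\<close>
definition obj_value :: "real \<Rightarrow> real \<Rightarrow> real \<Rightarrow> real \<Rightarrow> real \<Rightarrow> real \<Rightarrow> real" where
  "obj_value G c x m s1 s2 = - \<alpha> m s1 s2 * G - (m + \<beta> m s1 s2) * x + \<gamma> s1 s2 * c + sgn p"

lemma obj_nonzero_slope: "D \<noteq> 0 \<Longrightarrow> obj G D x m s1 s2 = ereal (obj_value G (x / D) x m s1 s2)"
  unfolding G2obj_def obj_value_def Let_def by simp

definition is_argmin :: "real \<Rightarrow> real \<Rightarrow> real \<Rightarrow> real \<Rightarrow> real \<Rightarrow> real \<Rightarrow> bool" where
  "is_argmin G D x m s1 s2 \<longleftrightarrow>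
     s1 \<noteq> - \<sigma>1 \<and> (\<forall>m' s1' s2'. s1' \<noteq> - \<sigma>1 \<longrightarrow> obj G D x m s1 s2 \<le> obj G D x m' s1' s2')"

definition m_of_theta1 :: "real \<Rightarrow> real \<Rightarrow> real \<Rightarrow> real" where
  "m_of_theta1 t s1 s2 = (1 - \<rho>^2) * (s1 + \<sigma>1) * t + s2 * (\<mu>2 / \<sigma>2 - \<rho> * \<sigma>1)
     + s1 * (\<rho> * \<mu>2 / \<sigma>2 - \<sigma>1) + \<rho> * \<mu>2 / \<sigma>2 * \<sigma>1 - \<mu>1 - \<gamma> s1 s2"

lemma theta1_cleared:
  assumes "s1 \<noteq> - \<sigma>1" "\<sigma>2 \<noteq> 0" "\<rho>^2 \<noteq> 1"
  shows "(1 - \<rho>^2) * (s1 + \<sigma>1) * \<theta>1 m s1 s2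
    = (\<rho> * (\<sigma>2 * s2 - \<mu>2) * (s1 + \<sigma>1) - (\<mu>2 * s2 - (m + \<mu>1 + s1 * \<sigma>1 + (s1^2 + s2^2) / 2) * \<sigma>2)) / \<sigma>2"
proof -
  define r where "r = 1 - \<rho>^2"
  have "s1 + \<sigma>1 \<noteq> 0" "r \<noteq> 0" using assms unfolding r_def by auto
  then show ?thesis using assms(2) unfolding theta1_def r_def[symmetric]
    by (simp add: right_diff_distrib diff_divide_distrib) (simp add: field_simps)
qed

lemma m_of_theta1_theta1:
  assumes "s1 \<noteq> - \<sigma>1" "\<sigma>2 \<noteq> 0" "\<rho>^2 \<noteq> 1"
  shows "m_of_theta1 (\<theta>1 m s1 s2) s1 s2 = m"
  using assms(2) unfolding m_of_theta1_def theta1_cleared[OF assms] gamma_def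
  by (simp add: field_simps power2_eq_square)

lemma theta1_m_of_theta1:
  assumes "s1 \<noteq> - \<sigma>1" "\<sigma>2 \<noteq> 0" "\<rho>^2 \<noteq> 1"
  shows "\<theta>1 (m_of_theta1 t s1 s2) s1 s2 = t"
proof -
  have "(1 - \<rho>^2) * (s1 + \<sigma>1) \<noteq> 0" using assms by auto
  moreover have "m_of_theta1 (\<theta>1 (m_of_theta1 t s1 s2) s1 s2) s1 s2 = m_of_theta1 t s1 s2"
    by (rule m_of_theta1_theta1[OF assms])
  ultimately show ?thesis unfolding m_of_theta1_def by simp
qed

lemma alpha_theta1: "\<alpha> m s1 s2 = (1 + q) * \<delta> - q * (1 + q) / 2 * ((1 - \<rho>^2) * (\<theta>1 m s1 s2)^2 + (\<mu>2 / \<sigma>2)^2)"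
  unfolding alpha_def theta2_def Let_def by (simp add: algebra_simps power2_eq_square)

lemma beta_theta1: "\<beta> m s1 s2 = q * ((1 - \<rho>^2) * s1 * \<theta>1 m s1 s2 + \<mu>2 / \<sigma>2 * (\<rho> * s1 + s2))"
  unfolding beta_def theta2_def by (simp add: algebra_simps power2_eq_square)

definition \<kappa> :: real where
  "\<kappa> = \<mu>2 / \<sigma>2 * (1 + q) - \<rho> * \<sigma>1"

definition obj_const :: "real \<Rightarrow> real \<Rightarrow> real" where
  "obj_const G x = - (1 + q) * \<delta> * G + q * (1 + q) / 2 * G * (\<mu>2 / \<sigma>2)^2 - x * (\<rho> * \<mu>2 / \<sigma>2 * \<sigma>1 - \<mu>1) + sgn p"

lemma obj_value_theta1:
  assumes "s1 \<noteq> - \<sigma>1" "\<sigma>2 \<noteq> 0" "\<rho>^2 \<noteq> 1"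
    and t: "t = \<theta>1 m s1 s2" and u: "u = s2 + \<rho> * s1"
  shows "obj_value G c x m s1 s2 =
    (1 - \<rho>^2) * (q * (1 + q) * G / 2 * t^2 - x * (1 + q) * t * s1 + (c + x) / 2 * s1^2 + (- x * \<sigma>1) * t + x * \<sigma>1 * s1)
    + ((c + x) / 2 * u^2 + (- x * \<kappa>) * u) + obj_const G x"
proof -
  have m: "m = m_of_theta1 t s1 s2" using m_of_theta1_theta1[OF assms(1-3)] t by simp
  show ?thesis
    unfolding obj_value_def alpha_theta1 beta_theta1 t[symmetric] u
    by (subst m) (use assms(2) in \<open>simp add: m_of_theta1_def gamma_def \<kappa>_def obj_const_def field_simps power2_eq_square\<close>)
qed

end

locale G2_market = G2_coefficients +
  assumes rho: "-1 < \<rho>" "\<rho> < 1"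
    and sigma: "\<sigma>1 > 0" "\<sigma>2 > 0"
    and p_lt_1: "p < 1"
begin

lemma one_minus_rho2_pos: "1 - \<rho>^2 > 0"
  using rho by (simp add: abs_square_less_1)

lemma one_plus_q_pos: "1 + q > 0"
proof -
  have "1 + q = 1 / (1 - p)" unfolding qq_def using p_lt_1 by (simp add: field_simps)
  then show ?thesis using p_lt_1 by simp
qed

lemma gamma_eq_0_iff: "\<gamma> s1 s2 = 0 \<longleftrightarrow> s1 = 0 \<and> s2 = 0"
proof
  assume "\<gamma> s1 s2 = 0"
  then have "(s2 + \<rho> * s1)^2 + (1 - \<rho>^2) * s1^2 = 0"
    unfolding gamma_def by (simp add: algebra_simps power2_eq_square)
  then have "(1 - \<rho>^2) * s1^2 = 0" "(s2 + \<rho> * s1)^2 = 0"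
    using one_minus_rho2_pos by (smt (verit) mult_nonneg_nonneg zero_le_power2)+
  then show "s1 = 0 \<and> s2 = 0" using one_minus_rho2_pos by auto
qed (simp add: gamma_def)

lemma obj_zero_slope: "obj G 0 x m s1 s2 = (if s1 = 0 \<and> s2 = 0 then ereal (obj_value G 0 x m 0 0) else \<infinity>)"
  using gamma_eq_0_iff[of s1 s2] unfolding G2obj_def obj_value_def Let_def by auto

text \<open>The critical point of the quadratic forms of \<open>obj_value_theta1\<close> for \<open>c = x / D\<close>,
  where \<open>D = g'(x)\<close>.\<close>
definition theta1_opt :: "real \<Rightarrow> real \<Rightarrow> real \<Rightarrow> real" where
  "theta1_opt G D x = x * \<sigma>1 * (1 - q * D) / ((1 + q) * (q * G * (1 + D) - (1 + q) * x * D))"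

definition s1_opt :: "real \<Rightarrow> real \<Rightarrow> real \<Rightarrow> real" where
  "s1_opt G D x = D * ((1 + q) * theta1_opt G D x - \<sigma>1) / (1 + D)"

definition s2_opt :: "real \<Rightarrow> real \<Rightarrow> real \<Rightarrow> real" where
  "s2_opt G D x = \<kappa> * D / (1 + D) - \<rho> * s1_opt G D x"

definition m_opt :: "real \<Rightarrow> real \<Rightarrow> real \<Rightarrow> real" where
  "m_opt G D x = m_of_theta1 (theta1_opt G D x) (s1_opt G D x) (s2_opt G D x)"

lemma s_opt_zero_slope [simp]: "s1_opt G 0 x = 0" "s2_opt G 0 x = 0"
  unfolding s1_opt_def s2_opt_def by simp_all

lemma s1_opt_ne:
  assumes "1 + D > 0" "q * G * (1 + D) - (1 + q) * x * D > 0" "q * (G - x * D) > 0"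
  shows "s1_opt G D x \<noteq> - \<sigma>1"
proof -
  define N where "N = q * G * (1 + D) - (1 + q) * x * D"
  have "N > 0" using assms(2) N_def by simp
  have critical: "(1 + q) * N * theta1_opt G D x = x * \<sigma>1 * (1 - q * D)"
    unfolding theta1_opt_def N_def[symmetric] using \<open>N > 0\<close> one_plus_q_pos by simp
  have "N * (D * (1 + q) * theta1_opt G D x + \<sigma>1) = D * ((1 + q) * N * theta1_opt G D x) + \<sigma>1 * N"
    by (simp add: algebra_simps)
  also have "\<dots> = D * (x * \<sigma>1 * (1 - q * D)) + \<sigma>1 * N"
    unfolding critical ..
  also have "\<dots> = \<sigma>1 * ((1 + D) * (q * (G - x * D)))"
    unfolding N_def by (simp add: algebra_simps)
  finally have "N * (D * (1 + q) * theta1_opt G D x + \<sigma>1) = \<sigma>1 * ((1 + D) * (q * (G - x * D)))" .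
  moreover have "(1 + D) * (s1_opt G D x + \<sigma>1) = D * (1 + q) * theta1_opt G D x + \<sigma>1"
    unfolding s1_opt_def using assms(1) by (simp add: field_simps)
  moreover have "\<sigma>1 * ((1 + D) * (q * (G - x * D))) > 0" using assms sigma by simp
  ultimately show ?thesis by auto
qed

lemma theta1_m_opt:
  assumes "s1_opt G D x \<noteq> - \<sigma>1"
  shows "\<theta>1 (m_opt G D x) (s1_opt G D x) (s2_opt G D x) = theta1_opt G D x"
  unfolding m_opt_def using theta1_m_of_theta1 assms sigma one_minus_rho2_pos by simp

lemma m_eq_m_opt:
  assumes "s1_opt G D x \<noteq> - \<sigma>1" "\<theta>1 m (s1_opt G D x) (s2_opt G D x) = theta1_opt G D x"
  shows "m = m_opt G D x"
  using m_of_theta1_theta1[of "s1_opt G D x" "m" "s2_opt G D x"] assms sigma one_minus_rho2_pos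
  unfolding m_opt_def by simp

lemma interior_critical_point:
  assumes D: "D \<noteq> 0" "x / D > 0" "1 + D > 0" and N: "q * G * (1 + D) - (1 + q) * x * D > 0"
  defines "P \<equiv> q * (1 + q) * G / 2" and "R \<equiv> x * (1 + q)" and "k \<equiv> (x / D + x) / 2"
  shows "k > 0" and "R^2 < 4 * P * k"
    and "2 * P * theta1_opt G D x - R * s1_opt G D x + - x * \<sigma>1 = 0"
    and "2 * k * s1_opt G D x - R * theta1_opt G D x + x * \<sigma>1 = 0"
    and "2 * k * (\<kappa> * D / (1 + D)) + - x * \<kappa> = 0"
proof -
  define t0 where "t0 = theta1_opt G D x"
  have two_k: "2 * k = x * (1 + D) / D" unfolding k_def using D by (simp add: field_simps)
  have k: "k = x / D * (1 + D) / 2" unfolding k_def using D by (simp add: field_simps)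
  have "x / D * (1 + D) > 0" using D(2,3) by (rule mult_pos_pos)
  then show "k > 0" unfolding k by (rule half_gt_zero)
  have "4 * P * k - R^2 = (1 + q) * (x / D) * (q * G * (1 + D) - (1 + q) * x * D)"
    unfolding P_def R_def k_def using D by (simp add: field_simps power2_eq_square)
  moreover have "(1 + q) * (x / D) * (q * G * (1 + D) - (1 + q) * x * D) > 0"
    using one_plus_q_pos D N by (intro mult_pos_pos)
  ultimately show "R^2 < 4 * P * k" by linarith
  have "(1 + q) * (q * G * (1 + D) - (1 + q) * x * D) * t0 = x * \<sigma>1 * (1 - q * D)"
    unfolding t0_def theta1_opt_def using one_plus_q_pos N by simp
  then show "2 * P * theta1_opt G D x - R * s1_opt G D x + - x * \<sigma>1 = 0"
    unfolding P_def R_def s1_opt_def t0_def[symmetric] using D by (simp add: field_simps)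
  have "2 * k * s1_opt G D x = x * ((1 + q) * t0 - \<sigma>1)"
    unfolding two_k s1_opt_def t0_def[symmetric] using D by simp
  then show "2 * k * s1_opt G D x - R * theta1_opt G D x + x * \<sigma>1 = 0"
    unfolding R_def t0_def by (simp add: algebra_simps)
  have "2 * k * (\<kappa> * D / (1 + D)) = x * \<kappa>" unfolding two_k using D by simp
  then show "2 * k * (\<kappa> * D / (1 + D)) + - x * \<kappa> = 0" by simp
qed

lemma obj_value_min_interior:
  assumes D: "D \<noteq> 0" "x / D > 0" "1 + D > 0"
    and N: "q * G * (1 + D) - (1 + q) * x * D > 0" and GD: "q * (G - x * D) > 0"
    and s1: "s1 \<noteq> - \<sigma>1"
  shows "obj_value G (x / D) x (m_opt G D x) (s1_opt G D x) (s2_opt G D x) \<le> obj_value G (x / D) x m s1 s2"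
    and "obj_value G (x / D) x m s1 s2 \<le> obj_value G (x / D) x (m_opt G D x) (s1_opt G D x) (s2_opt G D x)
           \<Longrightarrow> m = m_opt G D x \<and> s1 = s1_opt G D x \<and> s2 = s2_opt G D x"
proof -
  define t0 s0 u0 where "t0 = theta1_opt G D x" and "s0 = s1_opt G D x" and "u0 = \<kappa> * D / (1 + D)"
  define P R k where "P = q * (1 + q) * G / 2" and "R = x * (1 + q)" and "k = (x / D + x) / 2"
  define f where "f t s = P * t^2 - R * t * s + k * s^2 + (- x * \<sigma>1) * t + x * \<sigma>1 * s" for t s
  define h where "h u = k * u^2 + (- x * \<kappa>) * u" for u
  note crit = interior_critical_point[OF D N, folded P_def R_def k_def t0_def s0_def u0_def]
  have "P > 0" using crit(1,2) by (smt (verit) mult_nonpos_nonneg zero_le_power2)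
  note min2 = quadratic_min_2d[OF \<open>P > 0\<close> crit(2-4)] and min1 = quadratic_min_1d[OF crit(1,5)]
  have s0: "s0 \<noteq> - \<sigma>1" unfolding s0_def using s1_opt_ne D N GD by simp
  have split: "obj_value G (x / D) x m' s1' s2'
      = (1 - \<rho>^2) * f (\<theta>1 m' s1' s2') s1' + h (s2' + \<rho> * s1') + obj_const G x"
    if "s1' \<noteq> - \<sigma>1" for m' s1' s2'
    using obj_value_theta1[OF that] sigma one_minus_rho2_pos unfolding f_def h_def P_def R_def k_def by simp
  have split_opt: "obj_value G (x / D) x (m_opt G D x) s0 (s2_opt G D x) = (1 - \<rho>^2) * f t0 s0 + h u0 + obj_const G x"
    using split[OF s0] theta1_m_opt[OF s0[unfolded s0_def]] unfolding t0_def s0_def u0_def s2_opt_def by simp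
  have f_min: "(1 - \<rho>^2) * f t0 s0 \<le> (1 - \<rho>^2) * f (\<theta>1 m s1 s2) s1"
    using min2(1) one_minus_rho2_pos unfolding f_def by simp
  have h_min: "h u0 \<le> h (s2 + \<rho> * s1)"
    using min1(1) unfolding h_def by simp
  show "obj_value G (x / D) x (m_opt G D x) (s1_opt G D x) (s2_opt G D x) \<le> obj_value G (x / D) x m s1 s2"
    using f_min h_min unfolding split[OF s1] split_opt[unfolded s0_def] s0_def by linarith
  assume "obj_value G (x / D) x m s1 s2 \<le> obj_value G (x / D) x (m_opt G D x) (s1_opt G D x) (s2_opt G D x)"
  then have "(1 - \<rho>^2) * f (\<theta>1 m s1 s2) s1 + h (s2 + \<rho> * s1) \<le> (1 - \<rho>^2) * f t0 s0 + h u0"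
    unfolding split[OF s1] split_opt[unfolded s0_def] s0_def by linarith
  then have "(1 - \<rho>^2) * f (\<theta>1 m s1 s2) s1 \<le> (1 - \<rho>^2) * f t0 s0" "h (s2 + \<rho> * s1) \<le> h u0"
    using f_min h_min by linarith+
  then have "f (\<theta>1 m s1 s2) s1 \<le> f t0 s0" "h (s2 + \<rho> * s1) \<le> h u0"
    using one_minus_rho2_pos by simp_all
  then have "\<theta>1 m s1 s2 = t0" "s1 = s0" "s2 + \<rho> * s1 = u0"
    using min2(2) min1(2) unfolding f_def h_def by auto
  then have "\<theta>1 m s1 s2 = theta1_opt G D x" "s1 = s1_opt G D x" "s2 = s2_opt G D x"
    unfolding t0_def s0_def u0_def s2_opt_def by (auto simp: eq_diff_eq)
  then show "m = m_opt G D x \<and> s1 = s1_opt G D x \<and> s2 = s2_opt G D x"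
    using m_eq_m_opt[OF s0[unfolded s0_def]] by simp
qed

lemma obj_value_min_endpoint:
  assumes "q * G > 0"
  shows "obj_value G 0 x (m_opt G 0 x) 0 0 \<le> obj_value G 0 x m 0 0"
    and "obj_value G 0 x m 0 0 \<le> obj_value G 0 x (m_opt G 0 x) 0 0 \<Longrightarrow> m = m_opt G 0 x"
proof -
  define t0 where "t0 = theta1_opt G 0 x"
  define k where "k = (1 - \<rho>^2) * (q * (1 + q) * G / 2)"
  define b where "b = (1 - \<rho>^2) * (- x * \<sigma>1)"
  have "q * (1 + q) * G / 2 = (1 + q) * (q * G) / 2" by simp
  then have "k > 0" unfolding k_def using one_minus_rho2_pos one_plus_q_pos assms
    by (metis half_gt_zero mult_pos_pos)
  have split: "obj_value G 0 x m' 0 0 = k * (\<theta>1 m' 0 0)^2 + b * \<theta>1 m' 0 0 + obj_const G x" for m'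
    using obj_value_theta1[where ?s1.0 = 0 and ?s2.0 = 0 and m = m' and t = "\<theta>1 m' 0 0" and u = 0 and c = 0
        and G = G and x = x]
      sigma one_minus_rho2_pos
    unfolding k_def b_def by (simp add: algebra_simps)
  have s0: "s1_opt G 0 x \<noteq> - \<sigma>1" using sigma by simp
  have opt: "\<theta>1 (m_opt G 0 x) 0 0 = t0" using theta1_m_opt[OF s0] unfolding t0_def by simp
  have "(1 + q) * (q * G) \<noteq> 0" using assms one_plus_q_pos by (metis less_irrefl mult_pos_pos)
  then have "(1 + q) * (q * G) * t0 = x * \<sigma>1"
    unfolding t0_def theta1_opt_def by simp
  moreover have "2 * k * t0 + b = (1 - \<rho>^2) * ((1 + q) * (q * G) * t0 - x * \<sigma>1)"
    unfolding k_def b_def by (simp add: field_simps)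
  ultimately have crit: "2 * k * t0 + b = 0" by simp
  note min1 = quadratic_min_1d[OF \<open>k > 0\<close> crit]
  show "obj_value G 0 x (m_opt G 0 x) 0 0 \<le> obj_value G 0 x m 0 0"
    unfolding split opt using min1(1) by simp
  assume "obj_value G 0 x m 0 0 \<le> obj_value G 0 x (m_opt G 0 x) 0 0"
  then have "\<theta>1 m 0 0 = t0" unfolding split opt using min1(2) by simp
  then show "m = m_opt G 0 x" using m_eq_m_opt[OF s0] unfolding t0_def by simp
qed

lemma is_argmin_iff:
  assumes G: "q * G > 0" and D: "1 + D > 0" "D \<noteq> 0 \<Longrightarrow> x / D > 0"
    and N: "q * G * (1 + D) - (1 + q) * x * D > 0" and GD: "q * (G - x * D) > 0"
  shows "is_argmin G D x m s1 s2 \<longleftrightarrow> m = m_opt G D x \<and> s1 = s1_opt G D x \<and> s2 = s2_opt G D x"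
proof -
  let ?opt = "obj G D x (m_opt G D x) (s1_opt G D x) (s2_opt G D x)"
  have minimal: "?opt \<le> obj G D x m' s1' s2'" if "s1' \<noteq> - \<sigma>1" for m' s1' s2'
  proof (cases "D = 0")
    case True
    then show ?thesis using obj_value_min_endpoint(1)[OF G] by (simp add: obj_zero_slope)
  next
    case False
    then show ?thesis using obj_value_min_interior(1)[OF False D(2)[OF False] D(1) N GD that]
      by (simp add: obj_nonzero_slope)
  qed
  have unique: "m' = m_opt G D x \<and> s1' = s1_opt G D x \<and> s2' = s2_opt G D x"
    if "s1' \<noteq> - \<sigma>1" "obj G D x m' s1' s2' \<le> ?opt" for m' s1' s2'
  proof (cases "D = 0")
    case True
    then show ?thesis using that obj_value_min_endpoint(2)[OF G]
      by (simp add: obj_zero_slope split: if_splits)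
  next
    case False
    then show ?thesis using that obj_value_min_interior(2)[OF False D(2)[OF False] D(1) N GD that(1)]
      by (simp add: obj_nonzero_slope)
  qed
  show ?thesis
  proof
    assume "is_argmin G D x m s1 s2"
    then show "m = m_opt G D x \<and> s1 = s1_opt G D x \<and> s2 = s2_opt G D x"
      using unique unfolding is_argmin_def by (meson s1_opt_ne[OF D(1) N GD])
  next
    assume "m = m_opt G D x \<and> s1 = s1_opt G D x \<and> s2 = s2_opt G D x"
    then show "is_argmin G D x m s1 s2"
      using minimal s1_opt_ne[OF D(1) N GD] unfolding is_argmin_def by simp
  qed
qed

end

section \<open>The optimal controls along \<open>g\<close>\<close>

locale G2_solution = G2_market +
  fixes xl xu :: real and g g' g'' :: "real \<Rightarrow> real"
  assumes g_deriv: "\<forall>x\<in>{xl..xu}. (g has_real_derivative g' x) (at x within {xl..xu})"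
    and g'_deriv: "\<forall>x\<in>{xl..xu}. (g' has_real_derivative g'' x) (at x within {xl..xu})"
    and g''_cont: "continuous_on {xl..xu} g''"
    and g'_endpoints: "g' xl = 0" "g' xu = 0"
    and G4: "\<forall>x\<in>{xl..xu}. q * g x > 0
               \<and> q * g x * (g' x + 1) - (1 + q) * x * g' x > 0
               \<and> q * (g x - x * g' x) > 0
               \<and> g' x + 1 > 0"
    and G5: "\<forall>x\<in>{xl<..<xu}. g' x / x > 0"
begin

abbreviation "I \<equiv> {xl..xu}"

definition theta1_hat :: "real \<Rightarrow> real" where "theta1_hat x = theta1_opt (g x) (g' x) x"
definition m_hat :: "real \<Rightarrow> real" where "m_hat x = m_opt (g x) (g' x) x"
definition s1_hat :: "real \<Rightarrow> real" where "s1_hat x = s1_opt (g x) (g' x) x"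
definition s2_hat :: "real \<Rightarrow> real" where "s2_hat x = s2_opt (g x) (g' x) x"

lemma G4_at:
  assumes "x \<in> I"
  shows "q * g x > 0" "1 + g' x > 0" "q * g x * (1 + g' x) - (1 + q) * x * g' x > 0"
    "q * (g x - x * g' x) > 0"
  using G4 assms by (auto simp: add.commute)

lemma g'_nonzero: "x \<in> {xl<..<xu} \<Longrightarrow> g' x \<noteq> 0"
  using G5 by fastforce

lemma x_over_g'_pos:
  assumes "x \<in> I" "g' x \<noteq> 0"
  shows "x / g' x > 0"
proof -
  have "x \<in> {xl<..<xu}" using assms g'_endpoints by (cases "x = xl"; cases "x = xu") auto
  then show ?thesis using G5 by (auto simp: zero_less_divide_iff)
qed

lemma is_argmin_hat_iff:
  "x \<in> I \<Longrightarrow> is_argmin (g x) (g' x) x m s1 s2 \<longleftrightarrow> m = m_hat x \<and> s1 = s1_hat x \<and> s2 = s2_hat x"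
  unfolding m_hat_def s1_hat_def s2_hat_def using is_argmin_iff G4_at x_over_g'_pos by simp

lemma s1_hat_ne: "x \<in> I \<Longrightarrow> s1_hat x \<noteq> - \<sigma>1"
  unfolding s1_hat_def using s1_opt_ne G4_at by simp

lemma theta1_hat: "x \<in> I \<Longrightarrow> \<theta>1 (m_hat x) (s1_hat x) (s2_hat x) = theta1_hat x"
  using theta1_m_opt s1_hat_ne unfolding m_hat_def s1_hat_def s2_hat_def theta1_hat_def by simp

lemma lipschitz_g': "lipschitz I g'"
  using lipschitz_if_continuous_derivative g'_deriv g''_cont by blast

lemma lipschitz_g: "lipschitz I g"
  using lipschitz_if_continuous_derivative g_deriv lipschitz_imp_continuous_on[OF lipschitz_g'] by blast

lemmas lipschitz_basic = lipschitz_const lipschitz_ident lipschitz_add lipschitz_diff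
  lipschitz_mult[OF _ _ compact_Icc] lipschitz_g lipschitz_g'

lemma lipschitz_theta1_hat: "lipschitz I theta1_hat"
  unfolding theta1_hat_def theta1_opt_def
  using one_plus_q_pos G4_at by (intro lipschitz_divide lipschitz_basic) simp_all

definition s1_ratio :: "real \<Rightarrow> real" where
  "s1_ratio x = ((1 + q) * theta1_hat x - \<sigma>1) / (1 + g' x)"

lemma s1_hat_eq: "s1_hat x = g' x * s1_ratio x"
  unfolding s1_hat_def s1_opt_def s1_ratio_def theta1_hat_def by simp

lemma s2_hat_eq: "s2_hat x = \<kappa> * g' x / (1 + g' x) - \<rho> * s1_hat x"
  unfolding s2_hat_def s2_opt_def s1_hat_def by simp

lemma lipschitz_s1_ratio: "lipschitz I s1_ratio"
  unfolding s1_ratio_def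
  using G4_at by (intro lipschitz_divide lipschitz_basic lipschitz_theta1_hat) simp_all

lemma lipschitz_s1_hat: "lipschitz I s1_hat"
  unfolding s1_hat_eq by (intro lipschitz_basic lipschitz_s1_ratio)

lemma lipschitz_s2_hat: "lipschitz I s2_hat"
  unfolding s2_hat_eq
  using G4_at by (intro lipschitz_divide lipschitz_basic lipschitz_s1_hat) simp_all

lemma lipschitz_theta1: "lipschitz I (\<lambda>x. \<theta>1 (m_hat x) (s1_hat x) (s2_hat x))"
  using lipschitz_theta1_hat by (rule lipschitz_transform) (simp add: theta1_hat)

lemma lipschitz_theta2: "lipschitz I (\<lambda>x. \<theta>2 (m_hat x) (s1_hat x) (s2_hat x))"
  unfolding theta2_def by (intro lipschitz_basic lipschitz_theta1)

lemma lipschitz_alpha: "lipschitz I (\<lambda>x. \<alpha> (m_hat x) (s1_hat x) (s2_hat x))"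
  unfolding alpha_theta1 power2_eq_square by (intro lipschitz_basic lipschitz_theta1)

lemma lipschitz_beta: "lipschitz I (\<lambda>x. \<beta> (m_hat x) (s1_hat x) (s2_hat x))"
  unfolding beta_theta1 by (intro lipschitz_basic lipschitz_theta1 lipschitz_s1_hat lipschitz_s2_hat)

lemma lipschitz_gamma: "lipschitz I (\<lambda>x. \<gamma> (s1_hat x) (s2_hat x))"
  unfolding gamma_def power2_eq_square divide_inverse by (intro lipschitz_basic lipschitz_s1_hat lipschitz_s2_hat)

lemma lipschitz_kappa_ratio: "lipschitz I (\<lambda>x. \<kappa> / (1 + g' x))"
  using G4_at by (intro lipschitz_divide lipschitz_basic) simp_all

lemma lipschitz_s1_over_g': "lipschitz {xl<..<xu} (\<lambda>x. s1_hat x / g' x)"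
proof (rule lipschitz_transform)
  show "lipschitz {xl<..<xu} s1_ratio" using lipschitz_s1_ratio by (rule lipschitz_subset) auto
qed (simp add: s1_hat_eq g'_nonzero)

lemma lipschitz_s2_over_g': "lipschitz {xl<..<xu} (\<lambda>x. s2_hat x / g' x)"
proof (rule lipschitz_transform)
  show "lipschitz {xl<..<xu} (\<lambda>x. \<kappa> / (1 + g' x) - \<rho> * s1_ratio x)"
    by (rule lipschitz_subset[of I], intro lipschitz_basic lipschitz_kappa_ratio lipschitz_s1_ratio) auto
qed (simp add: s2_hat_eq s1_hat_eq g'_nonzero diff_divide_distrib)

lemma lipschitz_beta_over_g': "lipschitz {xl<..<xu} (\<lambda>x. \<beta> (m_hat x) (s1_hat x) (s2_hat x) / g' x)"
proof (rule lipschitz_transform)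
  show "lipschitz {xl<..<xu} (\<lambda>x. q * ((1 - \<rho>^2) * s1_ratio x * theta1_hat x + \<mu>2 / \<sigma>2 * (\<kappa> / (1 + g' x))))"
    by (rule lipschitz_subset[of I], intro lipschitz_basic lipschitz_kappa_ratio lipschitz_s1_ratio
      lipschitz_theta1_hat) auto
next
  fix x assume x: "x \<in> {xl<..<xu}"
  then have "\<rho> * s1_hat x + s2_hat x = g' x * (\<kappa> / (1 + g' x))" by (simp add: s2_hat_eq)
  then show "\<beta> (m_hat x) (s1_hat x) (s2_hat x) / g' x
      = q * ((1 - \<rho>^2) * s1_ratio x * theta1_hat x + \<mu>2 / \<sigma>2 * (\<kappa> / (1 + g' x)))"
    using x g'_nonzero[OF x] theta1_hat[of x] unfolding beta_theta1 s1_hat_eq by (simp add: field_simps)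
qed

lemma hat_ode:
  assumes G2: "\<forall>y\<in>I. (INF v\<in>{(m, s1, s2). s1 \<noteq> - \<sigma>1}.
                  (case v of (m, s1, s2) \<Rightarrow> obj (g y) (g' y) y m s1 s2)) = 0"
    and x: "x \<in> {xl<..<xu}"
  shows "- \<alpha> (m_hat x) (s1_hat x) (s2_hat x) * g' x - (m_hat x + \<beta> (m_hat x) (s1_hat x) (s2_hat x))
           + \<gamma> (s1_hat x) (s2_hat x) * deriv (\<lambda>y. y / g' y) x = 0"
proof -
  have xI: "x \<in> I" using x by auto
  define A B C where "A = \<alpha> (m_hat x) (s1_hat x) (s2_hat x)" and "B = \<beta> (m_hat x) (s1_hat x) (s2_hat x)"
    and "C = \<gamma> (s1_hat x) (s2_hat x)"
  define \<phi> where "\<phi> y = - A * g y - (m_hat x + B) * y + C * (y / g' y) + sgn p" for y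
  have obj_\<phi>: "obj (g y) (g' y) y (m_hat x) (s1_hat x) (s2_hat x) = ereal (\<phi> y)" if "y \<in> {xl<..<xu}" for y
    using g'_nonzero[OF that] unfolding \<phi>_def A_def B_def C_def by (simp add: obj_nonzero_slope obj_value_def)
  have "is_argmin (g x) (g' x) x (m_hat x) (s1_hat x) (s2_hat x)" using is_argmin_hat_iff[OF xI] by simp
  then have "obj (g x) (g' x) x (m_hat x) (s1_hat x) (s2_hat x)
      \<le> (INF v\<in>{(m, s1, s2). s1 \<noteq> - \<sigma>1}. (case v of (m, s1, s2) \<Rightarrow> obj (g x) (g' x) x m s1 s2))"
    unfolding is_argmin_def by (auto intro: INF_greatest)
  then have "\<phi> x \<le> 0" using G2 xI obj_\<phi>[OF x] by simp
  moreover have "0 \<le> \<phi> y" if y: "y \<in> {xl<..<xu}" for y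
  proof -
    have "(INF v\<in>{(m, s1, s2). s1 \<noteq> - \<sigma>1}. (case v of (m, s1, s2) \<Rightarrow> obj (g y) (g' y) y m s1 s2))
        \<le> obj (g y) (g' y) y (m_hat x) (s1_hat x) (s2_hat x)"
      by (rule INF_lower2[of "(m_hat x, s1_hat x, s2_hat x)"]) (use s1_hat_ne[OF xI] in auto)
    then show ?thesis using G2 y obj_\<phi>[OF y] by simp
  qed
  ultimately have local_min: "\<forall>y. \<bar>x - y\<bar> < min (x - xl) (xu - x) \<longrightarrow> \<phi> x \<le> \<phi> y"
    by (smt (verit) greaterThanLessThan_iff)
  have at_x: "at x within I = at x" using x by (simp add: at_within_Icc_at)
  have dg: "(g has_real_derivative g' x) (at x)" and dg': "(g' has_real_derivative g'' x) (at x)"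
    using g_deriv g'_deriv xI unfolding at_x[symmetric] by auto
  define d where "d = (1 * g' x - x * g'' x) / (g' x * g' x)"
  have dq: "((\<lambda>y. y / g' y) has_real_derivative d) (at x)"
    unfolding d_def using DERIV_ident dg' g'_nonzero[OF x] by (rule DERIV_divide)
  have "(\<phi> has_real_derivative - A * g' x - (m_hat x + B) * 1 + C * d + 0) (at x)"
    unfolding \<phi>_def by (intro DERIV_add DERIV_diff DERIV_cmult dg dq DERIV_ident DERIV_const)
  then have "- A * g' x - (m_hat x + B) * 1 + C * d + 0 = 0"
    using local_min x by (intro DERIV_local_min[where d = "min (x - xl) (xu - x)"]) auto
  then show ?thesis using DERIV_imp_deriv[OF dq] unfolding A_def B_def C_def by simp
qed

end

theorem corollary4p2:
  fixes \<rho> \<mu>1 \<mu>2 \<sigma>1 \<sigma>2 lamO lamU p \<delta> xl xu :: real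
    and g g' g'' :: "real \<Rightarrow> real"
  assumes rho: "-1 < \<rho>" "\<rho> < 1"
    and pos: "\<mu>1 > 0" "\<mu>2 > 0" "\<sigma>1 > 0" "\<sigma>2 > 0"
    and lam: "lamO > 0" "0 < lamU" "lamU < 1"
    and p: "p < 1" "p \<noteq> 0"
    and delta: "\<delta> > qq p / (2 * (1 - \<rho>^2)) *
                  ((\<mu>1/\<sigma>1)^2 + (\<mu>2/\<sigma>2)^2 - 2 * \<rho> * \<mu>1 * \<mu>2 / (\<sigma>1 * \<sigma>2))"
    and nd1: "\<mu>1 \<noteq> \<rho> * \<mu>2 * \<sigma>1 / \<sigma>2"
    and nd2: "\<mu>2 \<noteq> \<rho> * \<sigma>1 * \<sigma>2 / (1 + qq p)"
    and xlu: "xl < xu"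
    and C2: "\<forall>x\<in>{xl..xu}. (g has_real_derivative g' x) (at x within {xl..xu})"
            "\<forall>x\<in>{xl..xu}. (g' has_real_derivative g'' x) (at x within {xl..xu})"
            "continuous_on {xl..xu} g''"
    and G1: "\<mu>1 > \<rho> * \<mu>2 * \<sigma>1 / \<sigma>2 \<longrightarrow> 0 < xl"
            "\<mu>1 < \<rho> * \<mu>2 * \<sigma>1 / \<sigma>2 \<longrightarrow> xu < 0"
    and G2: "\<forall>x\<in>{xl..xu}.
               (INF v\<in>{(m, s1, s2). s1 \<noteq> - \<sigma>1}.
                  (case v of (m, s1, s2) \<Rightarrow> G2obj \<rho> \<mu>1 \<mu>2 \<sigma>1 \<sigma>2 p \<delta> (g x) (g' x) x m s1 s2)) = 0"
    and G3: "g' xl = 0" "g' xu = 0"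
            "((\<lambda>x. g' x / x) has_integral ln ((1 + lamO) / (1 - lamU))) {xl..xu}"
    and G4: "\<forall>x\<in>{xl..xu}. qq p * g x > 0
               \<and> qq p * g x * (g' x + 1) - (1 + qq p) * x * g' x > 0
               \<and> qq p * (g x - x * g' x) > 0
               \<and> g' x + 1 > 0"
    and G5: "\<forall>x\<in>{xl<..<xu}. g' x / x > 0"
  shows "\<exists>mh s1h s2h :: real \<Rightarrow> real.
     (\<forall>x\<in>{xl..xu}. \<forall>m s1 s2.
        (s1 \<noteq> - \<sigma>1 \<and>
         (\<forall>m' s1' s2'. s1' \<noteq> - \<sigma>1 \<longrightarrow>
            G2obj \<rho> \<mu>1 \<mu>2 \<sigma>1 \<sigma>2 p \<delta> (g x) (g' x) x m s1 s2
              \<le> G2obj \<rho> \<mu>1 \<mu>2 \<sigma>1 \<sigma>2 p \<delta> (g x) (g' x) x m' s1' s2'))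
        \<longleftrightarrow> (m = mh x \<and> s1 = s1h x \<and> s2 = s2h x))
   \<and> (let ah = (\<lambda>x. alpha \<rho> \<mu>1 \<mu>2 \<sigma>1 \<sigma>2 (qq p) \<delta> (mh x) (s1h x) (s2h x));
          bh = (\<lambda>x. beta \<rho> \<mu>1 \<mu>2 \<sigma>1 \<sigma>2 (qq p) (mh x) (s1h x) (s2h x));
          ch = (\<lambda>x. gamma \<rho> (s1h x) (s2h x));
          t1h = (\<lambda>x. theta1 \<rho> \<mu>1 \<mu>2 \<sigma>1 \<sigma>2 (mh x) (s1h x) (s2h x));
          t2h = (\<lambda>x. theta2 \<rho> \<mu>1 \<mu>2 \<sigma>1 \<sigma>2 (mh x) (s1h x) (s2h x))
      in (\<exists>L. L-lipschitz_on {xl..xu} ah)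
       \<and> (\<exists>L. L-lipschitz_on {xl..xu} bh)
       \<and> (\<exists>L. L-lipschitz_on {xl..xu} ch)
       \<and> (\<exists>L. L-lipschitz_on {xl..xu} t1h)
       \<and> (\<exists>L. L-lipschitz_on {xl..xu} t2h)
       \<and> (\<exists>L. L-lipschitz_on {xl<..<xu} (\<lambda>x. s1h x / g' x))
       \<and> (\<exists>L. L-lipschitz_on {xl<..<xu} (\<lambda>x. s2h x / g' x))
       \<and> (\<exists>L. L-lipschitz_on {xl<..<xu} (\<lambda>x. bh x / g' x))
       \<and> (\<forall>x\<in>{xl<..<xu}.
            - ah x * g' x - (mh x + bh x) + ch x * deriv (\<lambda>y. y / g' y) x = 0))"
proof -
  interpret G2_solution \<rho> \<mu>1 \<mu>2 \<sigma>1 \<sigma>2 p \<delta> xl xu g g' g''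
    using rho pos p(1) C2 G3(1,2) G4 G5 by unfold_locales auto
  show ?thesis
    unfolding Let_def lipschitz_def[symmetric] is_argmin_def[symmetric]
    using is_argmin_hat_iff hat_ode[OF G2] lipschitz_alpha lipschitz_beta lipschitz_gamma
      lipschitz_theta1 lipschitz_theta2 lipschitz_s1_over_g' lipschitz_s2_over_g' lipschitz_beta_over_g'
    by (intro exI[where x = m_hat] exI[where x = s1_hat] exI[where x = s2_hat] conjI) auto
qed

end
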